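(* Let $B=\begin{pmatrix}g_1&g_2\\-\Phi\overline{g_2}&\overline{g_1}\end{pmatrix}\in\mathrm{GL}(2,\mathbb{Q}[t,t^{-1}])$ with $g_2\neq0$. Then there exists a unique balanced matrix among the matrices $\{B\,g[0]^k : k\in\mathbb{Z}\}$, where $g[0]=\begin{pmatrix}t&0\\0&t^{-1}\end{pmatrix}$.
   Context: For $f\in\mathbb{Q}[t,t^{-1}]$, $\overline{f}(t)=f(t^{-1})$, and $\Phi=1+t^{-1}+t$. For a matrix $B=\begin{pmatrix}g_1&g_2\\-\Phi\overline{g_2}&\overline{g_1}\end{pmatrix}\in\mathrm{GL}(2,\mathbb{Q}[t,t^{-1}])$ with $g_2\neq0$, write $g_1=a_0t^{m_1}+\dots+a_{n_1-m_1}t^{n_1}$ and $g_2=b_0t^{m_2}+\dots+b_{n_2-m_2}t^{n_2}$ with $a_0,a_{n_1-m_1},b_0,b_{n_2-m_2}\neq0$. $B$ is upper-balanced if $m_1=m_2$ and $n_1=n_2+1$, lower-balanced if $m_1=m_2-1$ and $n_1=n_2$, and balanced if it is upper- or lower-balanced. *)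

theory Defs
  imports "HOL-Analysis.Analysis" "HOL-Library.Poly_Mapping"
begin

text \<open>Laurent polynomials Q[t,t^-1] are modelled as the group ring Q[Z]:
  finitely supported functions int =>0 rat with convolution product.
  The coefficient of t^n of f is Poly_Mapping.lookup f n.\<close>

type_synonym lpoly = "int \<Rightarrow>\<^sub>0 rat"

definition tpow :: "int \<Rightarrow> lpoly" where
  "tpow k = Poly_Mapping.single k 1"

definition lconj :: "lpoly \<Rightarrow> lpoly" where
  "lconj f = Poly_Mapping.map_key uminus f"

definition Phi :: lpoly where
  "Phi = 1 + tpow (-1) + tpow 1"

definition mat2 :: "lpoly \<Rightarrow> lpoly \<Rightarrow> lpoly \<Rightarrow> lpoly \<Rightarrow> lpoly^2^2" where
  "mat2 a b c d = (\<chi> i j. if i = 1 then (if j = 1 then a else b) else (if j = 1 then c else d))"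

definition Bmat :: "lpoly \<Rightarrow> lpoly \<Rightarrow> lpoly^2^2" where
  "Bmat g1 g2 = mat2 g1 g2 (- Phi * lconj g2) (lconj g1)"

definition g0 :: "lpoly^2^2" where
  "g0 = mat2 (tpow 1) 0 0 (tpow (-1))"

definition g0pow :: "int \<Rightarrow> lpoly^2^2" where
  "g0pow k = (if 0 \<le> k then ((\<lambda>M. M ** g0) ^^ nat k) (mat 1)
              else ((\<lambda>M. M ** matrix_inv g0) ^^ nat (- k)) (mat 1))"

definition lowdeg :: "lpoly \<Rightarrow> int" where
  "lowdeg f = Min (Poly_Mapping.keys f)"

definition highdeg :: "lpoly \<Rightarrow> int" where
  "highdeg f = Max (Poly_Mapping.keys f)"

definition upper_balanced :: "lpoly^2^2 \<Rightarrow> bool" where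
  "upper_balanced M \<longleftrightarrow> M$1$1 \<noteq> 0 \<and> M$1$2 \<noteq> 0 \<and>
     lowdeg (M$1$1) = lowdeg (M$1$2) \<and> highdeg (M$1$1) = highdeg (M$1$2) + 1"

definition lower_balanced :: "lpoly^2^2 \<Rightarrow> bool" where
  "lower_balanced M \<longleftrightarrow> M$1$1 \<noteq> 0 \<and> M$1$2 \<noteq> 0 \<and>
     lowdeg (M$1$1) = lowdeg (M$1$2) - 1 \<and> highdeg (M$1$1) = highdeg (M$1$2)"

definition balanced :: "lpoly^2^2 \<Rightarrow> bool" where
  "balanced M \<longleftrightarrow> upper_balanced M \<or> lower_balanced M"

end

theory Submission
  imports Defs
begin

text \<open>
  Let \<open>w(f)\<close> be the highest minus the lowest exponent of a nonzero Laurent polynomial \<open>f\<close>.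
  As \<open>B\<close> is invertible, \<open>det B = g\<^sub>1 lconj(g\<^sub>1) + \<Phi> g\<^sub>2 lconj(g\<^sub>2)\<close> is a unit, i.e. a monomial.
  Both summands are invariant under \<open>t \<mapsto> t\<^sup>-\<^sup>1\<close>, with exponents ranging exactly over
  \<open>[-w(g\<^sub>1), w(g\<^sub>1)]\<close> and \<open>[-w(g\<^sub>2)-1, w(g\<^sub>2)+1]\<close>; if these ranges differed, the wider summand
  would survive in the sum at both ends. Hence \<open>g\<^sub>1 \<noteq> 0\<close> and \<open>w(g\<^sub>1) = w(g\<^sub>2) + 1\<close>.
  The first row of \<open>B g[0]\<^sup>k\<close> is \<open>(g\<^sub>1 t\<^sup>k, g\<^sub>2 t\<^sup>-\<^sup>k)\<close>, so the gap between the lowest exponents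
  of \<open>g\<^sub>2\<close> and \<open>g\<^sub>1\<close> drops by \<open>2k\<close>; by the width relation the product is upper (lower)
  balanced iff this gap becomes \<open>0\<close> (\<open>1\<close>), which happens for exactly one \<open>k\<close>.
\<close>

lemma mat2_nth [simp]:
  "mat2 a b c d $ 1 $ 1 = a" "mat2 a b c d $ 1 $ 2 = b"
  "mat2 a b c d $ 2 $ 1 = c" "mat2 a b c d $ 2 $ 2 = d"
  by (simp_all add: mat2_def)

lemma mat2_mult:
  "mat2 a b c d ** mat2 a' b' c' d' =
   mat2 (a * a' + b * c') (a * b' + b * d') (c * a' + d * c') (c * b' + d * d')"
  by (simp add: vec_eq_iff forall_2 matrix_matrix_mult_def sum_2)

lemma mat_one_eq_mat2: "(mat 1 :: lpoly^2^2) = mat2 1 0 0 1"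
  by (simp add: vec_eq_iff forall_2 mat_def)

lemma det_dvd_one_if_invertible:
  fixes A :: "'a::comm_ring_1^'n^'n"
  assumes "invertible A"
  shows "det A dvd 1"
proof -
  obtain A' where "A ** A' = mat 1"
    using assms unfolding invertible_def by blast
  then have "det A * det A' = 1"
    by (metis det_mul det_I)
  then show ?thesis
    by (metis dvdI)
qed

lemma matrix_inv_eqI:
  fixes A X :: "'a::semiring_1^'n^'n"
  assumes "A ** X = mat 1" "X ** A = mat 1"
  shows "matrix_inv A = X"
proof -
  have "matrix_inv A ** A = mat 1"
    unfolding matrix_inv_def by (rule someI2[of _ X]) (use assms in auto)
  have "matrix_inv A = matrix_inv A ** (A ** X)"
    by (simp add: assms(1))
  also have "\<dots> = X"
    by (simp add: matrix_mul_assoc \<open>matrix_inv A ** A = mat 1\<close>)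
  finally show ?thesis .
qed

lemma det_Bmat: "det (Bmat g1 g2) = g1 * lconj g1 + Phi * (g2 * lconj g2)"
  by (simp add: det_2 Bmat_def algebra_simps)

lemma tpow_add: "tpow (a + b) = tpow a * tpow b"
  by (simp add: tpow_def mult_single)

lemma tpow_0 [simp]: "tpow 0 = 1"
  by (simp add: tpow_def)

lemma matrix_inv_g0: "matrix_inv g0 = mat2 (tpow (-1)) 0 0 (tpow 1)"
  by (rule matrix_inv_eqI)
    (simp_all add: g0_def mat2_mult tpow_add [symmetric] mat_one_eq_mat2)

lemma g0pow_eq_mat2: "g0pow k = mat2 (tpow k) 0 0 (tpow (-k))"
proof (cases "0 \<le> k")
  case True
  have "((\<lambda>M. M ** g0) ^^ n) (mat 1) = mat2 (tpow (int n)) 0 0 (tpow (- int n))" for n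
    by (induction n)
      (simp_all add: mat_one_eq_mat2 g0_def mat2_mult tpow_add [symmetric] algebra_simps)
  from this[of "nat k"] True show ?thesis
    by (simp add: g0pow_def)
next
  case False
  have "((\<lambda>M. M ** matrix_inv g0) ^^ n) (mat 1) = mat2 (tpow (- int n)) 0 0 (tpow (int n))" for n
    by (induction n)
      (simp_all add: mat_one_eq_mat2 matrix_inv_g0 mat2_mult tpow_add [symmetric] algebra_simps)
  from this[of "nat (-k)"] False show ?thesis
    by (simp add: g0pow_def)
qed

lemma Bmat_g0pow_first_row:
  "(Bmat g1 g2 ** g0pow k) $ 1 $ 1 = g1 * tpow k"
  "(Bmat g1 g2 ** g0pow k) $ 1 $ 2 = g2 * tpow (-k)"
  by (simp_all add: Bmat_def g0pow_eq_mat2 mat2_mult)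

lemma lookup_mult_keys:
  fixes f g :: "'a::comm_monoid_add \<Rightarrow>\<^sub>0 'b::semiring_0"
  shows "Poly_Mapping.lookup (f * g) k =
    (\<Sum>a\<in>Poly_Mapping.keys f. \<Sum>b\<in>Poly_Mapping.keys g.
       Poly_Mapping.lookup f a * Poly_Mapping.lookup g b when k = a + b)"
proof -
  have inner: "(\<Sum>q. Poly_Mapping.lookup g q when k = a + q) =
      (\<Sum>b\<in>Poly_Mapping.keys g. Poly_Mapping.lookup g b when k = a + b)" for a
    by (rule Sum_any.expand_superset) (auto simp: in_keys_iff when_def)
  have "Poly_Mapping.lookup (f * g) k =
      (\<Sum>a\<in>Poly_Mapping.keys f.
         Poly_Mapping.lookup f a * (\<Sum>q. Poly_Mapping.lookup g q when k = a + q))"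
    unfolding lookup_mult by (rule Sum_any.expand_superset) (auto simp: in_keys_iff)
  then show ?thesis
    by (simp add: inner sum_distrib_left mult_when)
qed

lemma lookup_mult_unique_decomposition:
  fixes f g :: "'a::comm_monoid_add \<Rightarrow>\<^sub>0 'b::semiring_0"
  assumes unique: "\<And>a b. a \<in> Poly_Mapping.keys f \<Longrightarrow> b \<in> Poly_Mapping.keys g \<Longrightarrow>
      a + b = a0 + b0 \<Longrightarrow> a = a0 \<and> b = b0"
  shows "Poly_Mapping.lookup (f * g) (a0 + b0) = Poly_Mapping.lookup f a0 * Poly_Mapping.lookup g b0"
proof -
  have "Poly_Mapping.lookup (f * g) (a0 + b0) =
      (\<Sum>a\<in>Poly_Mapping.keys f. (\<Sum>b\<in>Poly_Mapping.keys g.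
         Poly_Mapping.lookup f a * Poly_Mapping.lookup g b when b = b0) when a = a0)"
    unfolding lookup_mult_keys
  proof (intro sum.cong refl)
    fix a assume a: "a \<in> Poly_Mapping.keys f"
    have "(Poly_Mapping.lookup f a * Poly_Mapping.lookup g b when a0 + b0 = a + b) =
        ((Poly_Mapping.lookup f a * Poly_Mapping.lookup g b when b = b0) when a = a0)"
      if "b \<in> Poly_Mapping.keys g" for b
      using unique[OF a that] by (auto simp: when_def)
    then show "(\<Sum>b\<in>Poly_Mapping.keys g.
          Poly_Mapping.lookup f a * Poly_Mapping.lookup g b when a0 + b0 = a + b) =
        ((\<Sum>b\<in>Poly_Mapping.keys g.
          Poly_Mapping.lookup f a * Poly_Mapping.lookup g b when b = b0) when a = a0)"
      by (simp add: when_def)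
  qed
  also have "\<dots> = Poly_Mapping.lookup f a0 * Poly_Mapping.lookup g b0"
    by (simp add: when_def sum.delta' in_keys_iff)
  finally show ?thesis .
qed

lemma highdeg_in_keys: "(f::lpoly) \<noteq> 0 \<Longrightarrow> highdeg f \<in> Poly_Mapping.keys f"
  unfolding highdeg_def by (rule Max_in) auto

lemma lowdeg_in_keys: "(f::lpoly) \<noteq> 0 \<Longrightarrow> lowdeg f \<in> Poly_Mapping.keys f"
  unfolding lowdeg_def by (rule Min_in) auto

lemma le_highdeg: "n \<in> Poly_Mapping.keys f \<Longrightarrow> n \<le> highdeg f"
  unfolding highdeg_def by (rule Max_ge) auto

lemma lowdeg_le: "n \<in> Poly_Mapping.keys f \<Longrightarrow> lowdeg f \<le> n"
  unfolding lowdeg_def by (rule Min_le) auto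

lemma lowdeg_le_highdeg: "(f::lpoly) \<noteq> 0 \<Longrightarrow> lowdeg f \<le> highdeg f"
  using highdeg_in_keys lowdeg_le by blast

lemma lookup_highdeg_nonzero: "(f::lpoly) \<noteq> 0 \<Longrightarrow> Poly_Mapping.lookup f (highdeg f) \<noteq> 0"
  using highdeg_in_keys by (simp add: in_keys_iff)

lemma lookup_lowdeg_nonzero: "(f::lpoly) \<noteq> 0 \<Longrightarrow> Poly_Mapping.lookup f (lowdeg f) \<noteq> 0"
  using lowdeg_in_keys by (simp add: in_keys_iff)

lemma lookup_above_highdeg: "highdeg f < n \<Longrightarrow> Poly_Mapping.lookup f n = 0"
  using le_highdeg[of n f] by (auto simp: in_keys_iff)

lemma lookup_below_lowdeg: "n < lowdeg f \<Longrightarrow> Poly_Mapping.lookup f n = 0"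
  using lowdeg_le[of n f] by (auto simp: in_keys_iff)

lemma highdeg_eqI:
  "Poly_Mapping.lookup f n \<noteq> 0 \<Longrightarrow> (\<And>m. n < m \<Longrightarrow> Poly_Mapping.lookup f m = 0) \<Longrightarrow>
    highdeg f = n"
  unfolding highdeg_def by (rule Max_eqI) (auto simp: in_keys_iff not_less [symmetric])

lemma lowdeg_eqI:
  "Poly_Mapping.lookup f n \<noteq> 0 \<Longrightarrow> (\<And>m. m < n \<Longrightarrow> Poly_Mapping.lookup f m = 0) \<Longrightarrow>
    lowdeg f = n"
  unfolding lowdeg_def by (rule Min_eqI) (auto simp: in_keys_iff not_less [symmetric])

lemma keys_mult_within_degs:
  assumes "n \<in> Poly_Mapping.keys (f * g)"
  shows "lowdeg f + lowdeg g \<le> n \<and> n \<le> highdeg f + highdeg g"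
proof -
  obtain a b where "n = a + b" "a \<in> Poly_Mapping.keys f" "b \<in> Poly_Mapping.keys g"
    using assms keys_mult by blast
  then show ?thesis
    by (auto intro: add_mono le_highdeg lowdeg_le)
qed

lemma highdeg_mult:
  fixes f g :: lpoly
  assumes "f \<noteq> 0" "g \<noteq> 0"
  shows "highdeg (f * g) = highdeg f + highdeg g"
proof (rule highdeg_eqI)
  have "Poly_Mapping.lookup (f * g) (highdeg f + highdeg g) =
      Poly_Mapping.lookup f (highdeg f) * Poly_Mapping.lookup g (highdeg g)"
    by (rule lookup_mult_unique_decomposition) (auto dest!: le_highdeg)
  then show "Poly_Mapping.lookup (f * g) (highdeg f + highdeg g) \<noteq> 0"
    using assms by (simp add: lookup_highdeg_nonzero)
next
  fix m assume "highdeg f + highdeg g < m"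
  then show "Poly_Mapping.lookup (f * g) m = 0"
    using keys_mult_within_degs[of m f g] by (auto simp: in_keys_iff)
qed

lemma lowdeg_mult:
  fixes f g :: lpoly
  assumes "f \<noteq> 0" "g \<noteq> 0"
  shows "lowdeg (f * g) = lowdeg f + lowdeg g"
proof (rule lowdeg_eqI)
  have "Poly_Mapping.lookup (f * g) (lowdeg f + lowdeg g) =
      Poly_Mapping.lookup f (lowdeg f) * Poly_Mapping.lookup g (lowdeg g)"
    by (rule lookup_mult_unique_decomposition) (auto dest!: lowdeg_le)
  then show "Poly_Mapping.lookup (f * g) (lowdeg f + lowdeg g) \<noteq> 0"
    using assms by (simp add: lookup_lowdeg_nonzero)
next
  fix m assume "m < lowdeg f + lowdeg g"
  then show "Poly_Mapping.lookup (f * g) m = 0"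
    using keys_mult_within_degs[of m f g] by (auto simp: in_keys_iff)
qed

lemma highdeg_add_left:
  fixes f g :: lpoly
  assumes "f \<noteq> 0" "highdeg g < highdeg f"
  shows "highdeg (f + g) = highdeg f"
  using assms by (intro highdeg_eqI)
    (auto simp: lookup_add lookup_highdeg_nonzero lookup_above_highdeg)

lemma lowdeg_add_left:
  fixes f g :: lpoly
  assumes "f \<noteq> 0" "lowdeg f < lowdeg g"
  shows "lowdeg (f + g) = lowdeg f"
  using assms by (intro lowdeg_eqI)
    (auto simp: lookup_add lookup_lowdeg_nonzero lookup_below_lowdeg)

lemma lowdeg_eq_highdeg_if_unit:
  fixes f :: lpoly
  assumes "f dvd 1"
  shows "lowdeg f = highdeg f"
proof -
  obtain u where u: "1 = f * u"
    using assms by (rule dvdE)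
  then have "f \<noteq> 0" "u \<noteq> 0"
    by auto
  have "highdeg (1::lpoly) = 0" "lowdeg (1::lpoly) = 0"
    by (simp_all add: highdeg_def lowdeg_def)
  then have "highdeg f + highdeg u = 0" "lowdeg f + lowdeg u = 0"
    using highdeg_mult lowdeg_mult \<open>f \<noteq> 0\<close> \<open>u \<noteq> 0\<close> u by metis+
  moreover have "lowdeg f \<le> highdeg f" "lowdeg u \<le> highdeg u"
    using \<open>f \<noteq> 0\<close> \<open>u \<noteq> 0\<close> by (simp_all add: lowdeg_le_highdeg)
  ultimately show ?thesis
    by linarith
qed

lemma lookup_lconj: "Poly_Mapping.lookup (lconj f) n = Poly_Mapping.lookup f (- n)"
  by (simp add: lconj_def map_key.rep_eq inj_def)

lemma lconj_eq_0_iff [simp]: "lconj f = 0 \<longleftrightarrow> f = 0"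
  by (metis lookup_lconj lookup_zero minus_minus poly_mapping_eqI)

lemma highdeg_lconj: "f \<noteq> 0 \<Longrightarrow> highdeg (lconj f) = - lowdeg f"
  by (rule highdeg_eqI) (auto simp: lookup_lconj lookup_lowdeg_nonzero intro!: lookup_below_lowdeg)

lemma lowdeg_lconj: "f \<noteq> 0 \<Longrightarrow> lowdeg (lconj f) = - highdeg f"
  by (rule lowdeg_eqI) (auto simp: lookup_lconj lookup_highdeg_nonzero intro!: lookup_above_highdeg)

lemma lookup_tpow: "Poly_Mapping.lookup (tpow k) n = (if n = k then 1 else 0)"
  by (simp add: tpow_def lookup_single when_def)

lemma tpow_nonzero [simp]: "tpow k \<noteq> 0"
  by (metis lookup_tpow lookup_zero zero_neq_one)

lemma highdeg_tpow [simp]: "highdeg (tpow k) = k"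
  by (rule highdeg_eqI) (auto simp: lookup_tpow)

lemma lowdeg_tpow [simp]: "lowdeg (tpow k) = k"
  by (rule lowdeg_eqI) (auto simp: lookup_tpow)

lemma lookup_Phi: "Poly_Mapping.lookup Phi n = (if n \<in> {-1, 0, 1} then 1 else 0)"
  by (auto simp: Phi_def lookup_add lookup_one lookup_tpow when_def)

lemma Phi_nonzero: "Phi \<noteq> 0"
  by (metis lookup_Phi insertCI lookup_zero zero_neq_one)

lemma highdeg_Phi: "highdeg Phi = 1"
  by (rule highdeg_eqI) (auto simp: lookup_Phi)

lemma lowdeg_Phi: "lowdeg Phi = -1"
  by (rule lowdeg_eqI) (auto simp: lookup_Phi)

lemma width_relation:
  assumes "invertible (Bmat g1 g2)" and "g2 \<noteq> 0"
  shows "g1 \<noteq> 0" and "highdeg g1 - lowdeg g1 = highdeg g2 - lowdeg g2 + 1"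
proof -
  define P where "P = g1 * lconj g1"
  define Q where "Q = Phi * (g2 * lconj g2)"
  define e2 where "e2 = highdeg g2 - lowdeg g2 + 1"
  have monomial: "lowdeg (P + Q) = highdeg (P + Q)"
    using det_dvd_one_if_invertible[OF assms(1)] lowdeg_eq_highdeg_if_unit
    by (simp add: det_Bmat P_def Q_def)
  have "Q \<noteq> 0"
    using assms(2) Phi_nonzero by (simp add: Q_def)
  have Q_degs: "highdeg Q = e2" "lowdeg Q = - e2"
    using assms(2) Phi_nonzero
    by (simp_all add: Q_def e2_def highdeg_mult lowdeg_mult highdeg_lconj lowdeg_lconj highdeg_Phi
        lowdeg_Phi)
  have "1 \<le> e2"
    using lowdeg_le_highdeg[OF assms(2)] by (simp add: e2_def)
  show "g1 \<noteq> 0"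
  proof
    assume "g1 = 0"
    then have "P + Q = Q"
      by (simp add: P_def)
    with monomial Q_degs \<open>1 \<le> e2\<close> show False
      by simp
  qed
  define e1 where "e1 = highdeg g1 - lowdeg g1"
  have "P \<noteq> 0" and P_degs: "highdeg P = e1" "lowdeg P = - e1"
    using \<open>g1 \<noteq> 0\<close>
    by (simp_all add: P_def e1_def highdeg_mult lowdeg_mult highdeg_lconj lowdeg_lconj)
  show "e1 = e2"
  proof (cases e1 e2 rule: linorder_cases)
    case less
    then have "highdeg (Q + P) = e2" "lowdeg (Q + P) = - e2"
      using \<open>Q \<noteq> 0\<close> P_degs Q_degs by (simp_all add: highdeg_add_left lowdeg_add_left)
    with monomial \<open>1 \<le> e2\<close> show ?thesis
      by (simp add: add.commute)
  next
    case greater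
    then have "highdeg (P + Q) = e1" "lowdeg (P + Q) = - e1"
      using \<open>P \<noteq> 0\<close> P_degs Q_degs by (simp_all add: highdeg_add_left lowdeg_add_left)
    with monomial greater \<open>1 \<le> e2\<close> show ?thesis
      by simp
  qed
qed

lemma balanced_Bmat_g0pow_iff:
  assumes "g1 \<noteq> 0" "g2 \<noteq> 0"
    and "highdeg g1 - lowdeg g1 = highdeg g2 - lowdeg g2 + 1"
  shows "balanced (Bmat g1 g2 ** g0pow k) \<longleftrightarrow> k = (lowdeg g2 - lowdeg g1) div 2"
proof -
  have "balanced (Bmat g1 g2 ** g0pow k) \<longleftrightarrow>
      lowdeg g2 - lowdeg g1 = 2 * k \<or> lowdeg g2 - lowdeg g1 = 2 * k + 1"
    unfolding balanced_def upper_balanced_def lower_balanced_def Bmat_g0pow_first_row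
    using assms by (auto simp: highdeg_mult lowdeg_mult)
  also have "\<dots> \<longleftrightarrow> k = (lowdeg g2 - lowdeg g1) div 2"
    by presburger
  finally show ?thesis .
qed

theorem lemma4p14:
  fixes g1 g2 :: lpoly
  assumes "invertible (Bmat g1 g2)"
    and "g2 \<noteq> 0"
  shows "\<exists>!M. M \<in> {Bmat g1 g2 ** g0pow k | k. k \<in> (UNIV :: int set)} \<and> balanced M"
proof (rule ex1I)
  define k0 where "k0 = (lowdeg g2 - lowdeg g1) div 2"
  have balanced_iff: "balanced (Bmat g1 g2 ** g0pow k) \<longleftrightarrow> k = k0" for k
    unfolding k0_def using balanced_Bmat_g0pow_iff width_relation[OF assms] assms(2) by blast
  show "Bmat g1 g2 ** g0pow k0 \<in> {Bmat g1 g2 ** g0pow k | k. k \<in> UNIV} \<and>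
      balanced (Bmat g1 g2 ** g0pow k0)"
    using balanced_iff by blast
  fix M
  assume "M \<in> {Bmat g1 g2 ** g0pow k | k. k \<in> UNIV} \<and> balanced M"
  then obtain k where "M = Bmat g1 g2 ** g0pow k" "balanced M"
    by blast
  then show "M = Bmat g1 g2 ** g0pow k0"
    using balanced_iff by simp
qed

end
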